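(* Let $\mathcal{CS}$ be an axiomatically appropriate constant specification and $y$ an individual variable. For every finite set $X$ of individual variables with $y\notin X$, every formula $\varphi(y)$ and every justification term $t$, there are justification terms $f(t)$ and $s(t)$ such that (1) $\vdash_{\mathcal{CS}} t{:}_X\forall y\varphi(y)\to\forall y\, f(t){:}_{Xy}\varphi(y)$, and (2) $\vdash_{\mathcal{CS}} \exists y\, t{:}_{Xy}\varphi(y)\to s(t){:}_X\exists y\varphi(y)$.
   Context: Syntax of FOLPb: terms $t::=p_i\mid c\mid (t\cdot t)\mid (t+t)\mid !t\mid\mathsf b(t)\mid\mathsf{gen}_x(t)$; formulas $Px_1\dots x_n\mid\bot\mid\varphi\to\varphi\mid\forall x\varphi\mid t{:}_X\varphi$ with $X$ a finite set of individual variables; the free variables of $t{:}_X\psi$ are exactly those in $X$. $Xy$ denotes $X\cup\{y\}$ with $y\notin X$. Axioms of $\mathsf{FOLPb}_0$: A1 classical first-order axioms; A2 $t{:}_{Xy}\varphi\to t{:}_X\varphi$ if $y$ not free in $\varphi$; A3 $t{:}_X\varphi\to t{:}_{Xy}\varphi$; B1 $t{:}_X\varphi\to\varphi$; B2 $t{:}_X(\varphi\to\psi)\to(s{:}_X\varphi\to[t\cdot s]{:}_X\psi)$; B3 $t{:}_X\varphi\to[t+s]{:}_X\varphi$, $s{:}_X\varphi\to[t+s]{:}_X\varphi$; B4 $t{:}_X\varphi\to!t{:}_Xt{:}_X\varphi$; B5 $t{:}_X\varphi\to\mathsf{gen}_x(t){:}_X\forall x\varphi$ if $x\notin X$; Bb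 $\forall y\,t{:}_{Xy}\varphi(y)\to\mathsf b(t){:}_X\forall y\varphi(y)$; rules modus ponens and generalization. A constant specification $\mathcal{CS}$ is a set of formulas $c{:}\psi$ ($\psi$ an axiom, $c$ a constant); it is axiomatically appropriate if for every axiom $\psi$ some $c{:}\psi\in\mathcal{CS}$. $\vdash_{\mathcal{CS}}$ is provability in $\mathsf{FOLPb}_0$ with $\mathcal{CS}$ added as axioms. *)

theory Defs
  imports Main "HOL-Library.FSet"
begin

datatype jterm =
    PVar nat
  | Const nat
  | App jterm jterm
  | Plus jterm jterm
  | Bang jterm
  | Bt jterm
  | Gen nat jterm

datatype fm =
    Atom nat "nat list"
  | Bot
  | Imp fm fm
  | All nat fm
  | Just jterm "nat fset" fm

definition Neg :: "fm \<Rightarrow> fm" where "Neg \<phi> = Imp \<phi> Bot"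
definition Ex :: "nat \<Rightarrow> fm \<Rightarrow> fm" where "Ex x \<phi> = Neg (All x (Neg \<phi>))"

fun fv :: "fm \<Rightarrow> nat set" where
  "fv (Atom P xs) = set xs"
| "fv Bot = {}"
| "fv (Imp \<phi> \<psi>) = fv \<phi> \<union> fv \<psi>"
| "fv (All x \<phi>) = fv \<phi> - {x}"
| "fv (Just t X \<phi>) = fset X"

fun vars :: "fm \<Rightarrow> nat set" where
  "vars (Atom P xs) = set xs"
| "vars Bot = {}"
| "vars (Imp \<phi> \<psi>) = vars \<phi> \<union> vars \<psi>"
| "vars (All x \<phi>) = insert x (vars \<phi>)"
| "vars (Just t X \<phi>) = fset X \<union> vars \<phi>"

fun subst :: "nat \<Rightarrow> nat \<Rightarrow> fm \<Rightarrow> fm" where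
  "subst z y (Atom P xs) = Atom P (map (\<lambda>v. if v = y then z else v) xs)"
| "subst z y Bot = Bot"
| "subst z y (Imp \<phi> \<psi>) = Imp (subst z y \<phi>) (subst z y \<psi>)"
| "subst z y (All x \<phi>) = (if x = y then All x \<phi> else All x (subst z y \<phi>))"
| "subst z y (Just t X \<phi>) =
     (if y |\<in>| X then Just t (finsert z (X |-| {|y|})) (subst z y \<phi>) else Just t X \<phi>)"

text \<open>z is free for y in phi (conservative capture-avoidance condition).\<close>
fun freefor :: "nat \<Rightarrow> nat \<Rightarrow> fm \<Rightarrow> bool" where
  "freefor z y (Atom P xs) = True"
| "freefor z y Bot = True"
| "freefor z y (Imp \<phi> \<psi>) = (freefor z y \<phi> \<and> freefor z y \<psi>)"
| "freefor z y (All x \<phi>) = (y \<notin> fv (All x \<phi>) \<or> (x \<noteq> z \<and> freefor z y \<phi>))"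
| "freefor z y (Just t X \<phi>) =
     (y |\<notin>| X \<or> z = y \<or> (z |\<notin>| X \<and> z \<notin> vars \<phi>))"

inductive axiom :: "fm \<Rightarrow> bool" where
  A1_K: "axiom (Imp \<phi> (Imp \<psi> \<phi>))"
| A1_S: "axiom (Imp (Imp \<phi> (Imp \<psi> \<chi>)) (Imp (Imp \<phi> \<psi>) (Imp \<phi> \<chi>)))"
| A1_DN: "axiom (Imp (Neg (Neg \<phi>)) \<phi>)"
| A1_inst: "freefor z x \<phi> \<Longrightarrow> axiom (Imp (All x \<phi>) (subst z x \<phi>))"
| A1_dist: "x \<notin> fv \<phi> \<Longrightarrow> axiom (Imp (All x (Imp \<phi> \<psi>)) (Imp \<phi> (All x \<psi>)))"
| A2: "y |\<notin>| X \<Longrightarrow> y \<notin> fv \<phi> \<Longrightarrow> axiom (Imp (Just t (finsert y X) \<phi>) (Just t X \<phi>))"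
| A3: "y |\<notin>| X \<Longrightarrow> axiom (Imp (Just t X \<phi>) (Just t (finsert y X) \<phi>))"
| B1: "axiom (Imp (Just t X \<phi>) \<phi>)"
| B2: "axiom (Imp (Just t X (Imp \<phi> \<psi>)) (Imp (Just s X \<phi>) (Just (App t s) X \<psi>)))"
| B3l: "axiom (Imp (Just t X \<phi>) (Just (Plus t s) X \<phi>))"
| B3r: "axiom (Imp (Just s X \<phi>) (Just (Plus t s) X \<phi>))"
| B4: "axiom (Imp (Just t X \<phi>) (Just (Bang t) X (Just t X \<phi>)))"
| B5: "x |\<notin>| X \<Longrightarrow> axiom (Imp (Just t X \<phi>) (Just (Gen x t) X (All x \<phi>)))"
| Bb: "y |\<notin>| X \<Longrightarrow>
     axiom (Imp (All y (Just t (finsert y X) \<phi>)) (Just (Bt t) X (All y \<phi>)))"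

definition const_spec :: "fm set \<Rightarrow> bool" where
  "const_spec CS \<longleftrightarrow> (\<forall>\<chi>\<in>CS. \<exists>c \<psi>. \<chi> = Just (Const c) {||} \<psi> \<and> axiom \<psi>)"

definition axiomatically_appropriate :: "fm set \<Rightarrow> bool" where
  "axiomatically_appropriate CS \<longleftrightarrow>
     const_spec CS \<and> (\<forall>\<psi>. axiom \<psi> \<longrightarrow> (\<exists>c. Just (Const c) {||} \<psi> \<in> CS))"

inductive prv :: "fm set \<Rightarrow> fm \<Rightarrow> bool" where
  ax: "axiom \<phi> \<Longrightarrow> prv CS \<phi>"
| cs: "\<phi> \<in> CS \<Longrightarrow> prv CS \<phi>"
| mp: "prv CS (Imp \<phi> \<psi>) \<Longrightarrow> prv CS \<phi> \<Longrightarrow> prv CS \<psi>"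
| gen: "prv CS \<phi> \<Longrightarrow> prv CS (All x \<phi>)"

end

theory Submission
  imports Defs
begin

text \<open>Internalization: since every axiom has a constant proving it, each theorem \<open>\<psi>\<close> of
  \<open>FOLPb\<^sub>0\<close> has a proof term \<open>r\<close> with \<open>\<turnstile> r:\<^sub>\<emptyset>\<psi>\<close>, which A3 transfers to any index set.
  Internalizing the first-order theorems \<open>\<forall>y\<phi> \<rightarrow> \<phi>\<close> and \<open>\<phi> \<rightarrow> \<exists>y\<phi>\<close> and applying them to \<open>t\<close>
  by B2 gives \<open>t:\<^sub>X\<forall>y\<phi> \<rightarrow> (r\<cdot>t):\<^sub>X\<^sub>y\<phi>\<close> and \<open>t:\<^sub>X\<^sub>y\<phi> \<rightarrow> (q\<cdot>t):\<^sub>X\<^sub>y\<exists>y\<phi>\<close>; in the first the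
  antecedent has no free \<open>y\<close>, so generalization applies, and in the second A2 drops \<open>y\<close>
  from the index set, after which \<open>\<exists>\<close>-elimination applies.\<close>

lemma subst_same: "subst y y \<phi> = \<phi>"
  by (induction \<phi>) (auto simp: map_idI)

lemma freefor_same: "freefor y y \<phi>"
  by (induction \<phi>) auto

lemma prv_All_elim: "prv CS (Imp (All y \<phi>) \<phi>)"
  using prv.ax[OF A1_inst[OF freefor_same, of y \<phi>]] by (simp add: subst_same)

lemma prv_All_intro:
  assumes "prv CS (Imp A B)" and "y \<notin> fv A"
  shows "prv CS (Imp A (All y B))"
  using assms by (intro prv.mp[OF prv.ax[OF A1_dist] prv.gen])

lemma prv_imp_trans:
  assumes ab: "prv CS (Imp A B)" and bc: "prv CS (Imp B C)"
  shows "prv CS (Imp A C)"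
proof -
  have "prv CS (Imp A (Imp B C))" by (rule prv.mp[OF prv.ax[OF A1_K] bc])
  then have "prv CS (Imp (Imp A B) (Imp A C))" by (rule prv.mp[OF prv.ax[OF A1_S]])
  then show ?thesis using ab by (rule prv.mp)
qed

lemma prv_imp_swap:
  assumes "prv CS (Imp P (Imp Q R))"
  shows "prv CS (Imp Q (Imp P R))"
proof -
  have "prv CS (Imp (Imp P Q) (Imp P R))" by (rule prv.mp[OF prv.ax[OF A1_S] assms])
  then show ?thesis by (rule prv_imp_trans[OF prv.ax[OF A1_K]])
qed

lemma prv_contrapos:
  assumes "prv CS (Imp A B)"
  shows "prv CS (Imp (Neg B) (Neg A))"
proof -
  have "prv CS (Imp (Imp A B) (Imp (Imp B Bot) (Imp A Bot)))"
    by (rule prv_imp_swap[OF prv_imp_trans[OF prv.ax[OF A1_K] prv.ax[OF A1_S]]])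
  then show ?thesis unfolding Neg_def using assms by (rule prv.mp)
qed

lemma prv_Ex_intro: "prv CS (Imp \<phi> (Ex y \<phi>))"
proof -
  have "prv CS (Imp (All y (Neg \<phi>)) (Imp \<phi> Bot))"
    using prv_All_elim[of CS y "Neg \<phi>"] by (simp add: Neg_def)
  then show ?thesis unfolding Ex_def Neg_def by (rule prv_imp_swap)
qed

lemma prv_Ex_elim:
  assumes "prv CS (Imp A B)" and "y \<notin> fv B"
  shows "prv CS (Imp (Ex y A) B)"
proof -
  have "prv CS (Imp (Neg B) (All y (Neg A)))"
    using assms by (intro prv_All_intro prv_contrapos) (simp_all add: Neg_def)
  then have "prv CS (Imp (Neg (All y (Neg A))) (Neg (Neg B)))" by (rule prv_contrapos)
  then show ?thesis unfolding Ex_def by (rule prv_imp_trans[OF _ prv.ax[OF A1_DN]])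
qed

lemma prv_internalize:
  assumes "prv CS \<psi>" and "axiomatically_appropriate CS"
  shows "\<exists>r. prv CS (Just r {||} \<psi>)"
  using assms
proof (induction rule: prv.induct)
  case (ax \<phi> CS)
  then show ?case unfolding axiomatically_appropriate_def by (metis prv.cs)
next
  case (cs \<phi> CS)
  then obtain c \<chi> where \<phi>: "\<phi> = Just (Const c) {||} \<chi>"
    unfolding axiomatically_appropriate_def const_spec_def by blast
  have "prv CS (Just (Bang (Const c)) {||} \<phi>)"
    using prv.mp[OF prv.ax[OF B4] prv.cs[OF cs(1)[unfolded \<phi>]]] \<phi> by simp
  then show ?case by blast
next
  case (mp CS \<phi> \<psi>)
  then obtain r1 r2 where "prv CS (Just r1 {||} (Imp \<phi> \<psi>))" "prv CS (Just r2 {||} \<phi>)"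
    by blast
  then have "prv CS (Just (App r1 r2) {||} \<psi>)"
    by (rule prv.mp[OF prv.mp[OF prv.ax[OF B2]]])
  then show ?case by blast
next
  case (gen CS \<phi> x)
  then obtain r where "prv CS (Just r {||} \<phi>)" by blast
  then have "prv CS (Just (Gen x r) {||} (All x \<phi>))"
    using prv.mp[OF prv.ax[OF B5[of x "{||}" r \<phi>]]] by simp
  then show ?case by blast
qed

lemma prv_Just_weaken: "prv CS (Just r {||} \<psi>) \<Longrightarrow> prv CS (Just r Y \<psi>)"
proof (induction Y)
  case empty
  then show ?case by simp
next
  case (insert x Y)
  then show ?case by (intro prv.mp[OF prv.ax[OF A3]]) auto
qed

lemma prv_Just_imp:
  assumes "axiomatically_appropriate CS" and "prv CS (Imp \<psi> \<chi>)"
  obtains r where "\<And>t Y. prv CS (Imp (Just t Y \<psi>) (Just (App r t) Y \<chi>))"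
proof -
  obtain r where "prv CS (Just r {||} (Imp \<psi> \<chi>))"
    using prv_internalize[OF assms(2,1)] by blast
  then have "prv CS (Imp (Just t Y \<psi>) (Just (App r t) Y \<chi>))" for t Y
    by (rule prv.mp[OF prv.ax[OF B2] prv_Just_weaken])
  then show ?thesis by (rule that)
qed

theorem mainTheorem5:
  fixes CS :: "fm set" and y :: nat and X :: "nat fset" and \<phi> :: fm and t :: jterm
  assumes "axiomatically_appropriate CS"
    and "y |\<notin>| X"
  shows "\<exists>f s.
           prv CS (Imp (Just t X (All y \<phi>)) (All y (Just f (finsert y X) \<phi>))) \<and>
           prv CS (Imp (Ex y (Just t (finsert y X) \<phi>)) (Just s X (Ex y \<phi>)))"
proof -
  obtain r where r: "\<And>t Y. prv CS (Imp (Just t Y (All y \<phi>)) (Just (App r t) Y \<phi>))"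
    using prv_Just_imp[OF assms(1) prv_All_elim] by blast
  obtain q where q: "\<And>t Y. prv CS (Imp (Just t Y \<phi>) (Just (App q t) Y (Ex y \<phi>)))"
    using prv_Just_imp[OF assms(1) prv_Ex_intro] by blast
  have "prv CS (Imp (Just t X (All y \<phi>)) (Just (App r t) (finsert y X) \<phi>))"
    by (rule prv_imp_trans[OF prv.ax[OF A3[OF assms(2)]] r])
  then have f: "prv CS (Imp (Just t X (All y \<phi>)) (All y (Just (App r t) (finsert y X) \<phi>)))"
    by (rule prv_All_intro) (simp add: assms(2))
  have "y \<notin> fv (Ex y \<phi>)" by (simp add: Ex_def Neg_def)
  then have "prv CS (Imp (Just t (finsert y X) \<phi>) (Just (App q t) X (Ex y \<phi>)))"
    by (rule prv_imp_trans[OF q prv.ax[OF A2[OF assms(2)]]])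
  then have s: "prv CS (Imp (Ex y (Just t (finsert y X) \<phi>)) (Just (App q t) X (Ex y \<phi>)))"
    by (rule prv_Ex_elim) (simp add: assms(2))
  from f s show ?thesis by blast
qed

end
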